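(* For all $y\in\{0,1\}^n$ and all $s_1,\dots,s_\ell\in\{0,1\}^n$, with $S=\{s_1,\dots,s_\ell\}$, $$\tilde G_y^2\,\hat a^\dagger_{s_1}\cdots\hat a^\dagger_{s_\ell}|\mathrm{vac}\rangle=\gamma_y^{(S)}\,\hat a^\dagger_{s_1}\cdots\hat a^\dagger_{s_\ell}|\mathrm{vac}\rangle.$$
   Context: Bosonic setting with $2^n$ modes indexed by $\{0,1\}^n$: position operators $\hat a_x,\hat a_x^\dagger$ with $[\hat a_x,\hat a_y^\dagger]=\delta_{xy}$, $[\hat a_x,\hat a_y]=[\hat a_x^\dagger,\hat a_y^\dagger]=0$, vacuum $|\mathrm{vac}\rangle$ annihilated by all $\hat a_x$; momentum operators $\tilde a_y=2^{-n/2}\sum_x(-1)^{x\cdot y}\hat a_x$, $\tilde a_y^\dagger=2^{-n/2}\sum_x(-1)^{x\cdot y}\hat a_x^\dagger$. Single $y$-momentum hopping operator $\tilde G_y=\frac1{\sqrt\ell}\sum_{x\in\{0,1\}^n}\tilde a^\dagger_{x\oplus y}\tilde a_x$. $\gamma_y^{(S)}=\frac1\ell\sum_{i,j\in[\ell]}(-1)^{y\cdot(s_i\oplus s_j)}$. *)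

theory Defs
  imports Complex_Main "HOL-Library.Multiset"
begin

type_synonym mode = "bool list"

definition modes :: "nat \<Rightarrow> mode set" where
  "modes n = {x. length x = n}"

definition bxor :: "mode \<Rightarrow> mode \<Rightarrow> mode" where
  "bxor x y = map2 (\<noteq>) x y"

(* inner product x.y mod 2 is encoded via the count of common 1 bits *)
definition bdot :: "mode \<Rightarrow> mode \<Rightarrow> nat" where
  "bdot x y = length (filter id (map2 (\<and>) x y))"

definition sgn_dot :: "mode \<Rightarrow> mode \<Rightarrow> complex" where
  "sgn_dot x y = (-1) ^ bdot x y"

(* Bosonic Fock space: vectors in the occupation-number basis, indexed by
   multisets of modes (occupation configurations). *)
type_synonym state = "mode multiset \<Rightarrow> complex"

definition vac :: state where
  "vac = (\<lambda>M. if M = {#} then 1 else 0)"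

definition cre :: "mode \<Rightarrow> state \<Rightarrow> state" where
  "cre x \<psi> = (\<lambda>M. if x \<in># M
      then complex_of_real (sqrt (real (count M x))) * \<psi> (M - {#x#}) else 0)"

definition ann :: "mode \<Rightarrow> state \<Rightarrow> state" where
  "ann x \<psi> = (\<lambda>M. complex_of_real (sqrt (real (count M x + 1))) * \<psi> (add_mset x M))"

definition mom_ann :: "nat \<Rightarrow> mode \<Rightarrow> state \<Rightarrow> state" where
  "mom_ann n y \<psi> = (\<lambda>M. complex_of_real (2 powr (- real n / 2)) *
      (\<Sum>x\<in>modes n. sgn_dot x y * ann x \<psi> M))"

definition mom_cre :: "nat \<Rightarrow> mode \<Rightarrow> state \<Rightarrow> state" where
  "mom_cre n y \<psi> = (\<lambda>M. complex_of_real (2 powr (- real n / 2)) *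
      (\<Sum>x\<in>modes n. sgn_dot x y * cre x \<psi> M))"

definition hop :: "nat \<Rightarrow> nat \<Rightarrow> mode \<Rightarrow> state \<Rightarrow> state" where
  "hop n l y \<psi> = (\<lambda>M. complex_of_real (1 / sqrt (real l)) *
      (\<Sum>x\<in>modes n. mom_cre n (bxor x y) (mom_ann n x \<psi>) M))"

definition gamma :: "mode \<Rightarrow> mode list \<Rightarrow> complex" where
  "gamma y ss = complex_of_real (1 / real (length ss)) *
      (\<Sum>i<length ss. \<Sum>j<length ss. sgn_dot y (bxor (ss ! i) (ss ! j)))"

definition cre_list :: "mode list \<Rightarrow> state" where
  "cre_list ss = foldr cre ss vac"

end

theory Submission
  imports Defs
begin

text \<open>Summing over \<open>x\<close>, orthogonality of the characters \<open>x \<mapsto> (-1)^(u\<cdot>x)\<close>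
  collapses \<open>G\<^sub>y\<close> to \<open>\<ell>^(-1/2) \<Sum>\<^sub>u (-1)^(u\<cdot>y) a\<^sup>\<dagger>\<^sub>u a\<^sub>u\<close>, which is diagonal in the
  occupation-number basis. The state \<open>a\<^sup>\<dagger>\<^sub>s\<^sub>1 \<cdots> a\<^sup>\<dagger>\<^sub>s\<^sub>\<ell> |vac\<rangle>\<close> is supported on the
  single configuration \<open>{#s\<^sub>1, \<dots>, s\<^sub>\<ell>#}\<close>, hence it is an eigenvector with eigenvalue
  \<open>\<ell>^(-1/2) \<Sum>\<^sub>i (-1)^(y\<cdot>s\<^sub>i)\<close>. The square of this eigenvalue is \<open>\<gamma>\<^sub>y\<close> because
  \<open>(-1)^(y\<cdot>s\<^sub>i) (-1)^(y\<cdot>s\<^sub>j) = (-1)^(y\<cdot>(s\<^sub>i \<oplus> s\<^sub>j))\<close>.\<close>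

lemma bdot_Nil [simp]: "bdot [] y = 0" "bdot x [] = 0"
  by (simp_all add: bdot_def)

lemma bdot_Cons [simp]: "bdot (a # x) (b # y) = (if a \<and> b then 1 else 0) + bdot x y"
  by (simp add: bdot_def)

lemma bdot_commute: "bdot x y = bdot y x"
proof (induction x arbitrary: y)
  case Nil
  then show ?case by simp
next
  case (Cons a x)
  then show ?case by (cases y) auto
qed

lemma bxor_Nil [simp]: "bxor [] y = []"
  by (simp add: bxor_def)

lemma bxor_Cons [simp]: "bxor (a # x) (b # y) = (a \<noteq> b) # bxor x y"
  by (simp add: bxor_def)

lemma sgn_dot_Nil [simp]: "sgn_dot [] y = 1" "sgn_dot x [] = 1"
  by (simp_all add: sgn_dot_def)

lemma sgn_dot_Cons [simp]:
  "sgn_dot (a # x) (b # y) = (if a \<and> b then -1 else 1) * sgn_dot x y"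
  by (simp add: sgn_dot_def)

lemma sgn_dot_commute: "sgn_dot x y = sgn_dot y x"
  by (simp add: sgn_dot_def bdot_commute)

lemma sgn_dot_bxor:
  "length x = length y \<Longrightarrow> sgn_dot u (bxor x y) = sgn_dot u x * sgn_dot u y"
proof (induction u arbitrary: x y)
  case Nil
  then show ?case by simp
next
  case (Cons a u)
  then show ?case
    by (cases x; cases y) auto
qed

lemma modes_0: "modes 0 = {[]}"
  by (auto simp: modes_def)

lemma modes_Suc: "modes (Suc n) = Cons True ` modes n \<union> Cons False ` modes n"
proof -
  have "x \<in> Cons True ` modes n \<union> Cons False ` modes n" if "x \<in> modes (Suc n)" for x
    using that by (cases x) (auto simp: modes_def)
  then show ?thesis
    by (auto simp: modes_def)
qed

lemma finite_modes [simp]: "finite (modes n)"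
  by (induction n) (simp_all add: modes_0 modes_Suc)

lemma sum_sgn_dot_orthogonal:
  "u \<in> modes n \<Longrightarrow> v \<in> modes n \<Longrightarrow>
   (\<Sum>x\<in>modes n. sgn_dot u x * sgn_dot v x) = (if u = v then 2 ^ n else 0)"
proof (induction n arbitrary: u v)
  case 0
  then show ?case by (simp add: modes_0)
next
  case (Suc n)
  obtain a u' where u: "u = a # u'" "u' \<in> modes n"
    using Suc.prems by (cases u) (auto simp: modes_def)
  obtain b v' where v: "v = b # v'" "v' \<in> modes n"
    using Suc.prems by (cases v) (auto simp: modes_def)
  have "(\<Sum>x\<in>modes (Suc n). sgn_dot u x * sgn_dot v x)
     = (\<Sum>x\<in>modes n. sgn_dot u (True # x) * sgn_dot v (True # x))
       + (\<Sum>x\<in>modes n. sgn_dot u (False # x) * sgn_dot v (False # x))"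
    unfolding modes_Suc by (subst sum.union_disjoint) (auto simp: sum.reindex)
  also have "\<dots> = ((if a then -1 else 1) * (if b then -1 else 1) + 1)
      * (\<Sum>x\<in>modes n. sgn_dot u' x * sgn_dot v' x)"
    by (simp add: u v sum_distrib_left algebra_simps sum.distrib)
  also have "\<dots> = (if u = v then 2 ^ Suc n else 0)"
    using Suc.IH[OF u(2) v(2)] u v by auto
  finally show ?case .
qed

lemma sum_sgn_dot_bxor_orthogonal:
  assumes "y \<in> modes n" "u \<in> modes n" "v \<in> modes n"
  shows "(\<Sum>x\<in>modes n. sgn_dot u (bxor x y) * sgn_dot v x)
    = (if u = v then sgn_dot u y * 2 ^ n else 0)"
proof -
  have "(\<Sum>x\<in>modes n. sgn_dot u (bxor x y) * sgn_dot v x)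
      = sgn_dot u y * (\<Sum>x\<in>modes n. sgn_dot u x * sgn_dot v x)"
    using assms(1) by (auto simp: sgn_dot_bxor modes_def sum_distrib_left mult_ac intro!: sum.cong)
  then show ?thesis
    using sum_sgn_dot_orthogonal[OF assms(2,3)] by simp
qed

lemma cre_linear_combination:
  "cre u (\<lambda>N. c * (\<Sum>v\<in>A. f v * \<phi> v N)) M = c * (\<Sum>v\<in>A. f v * cre u (\<phi> v) M)"
  by (simp add: cre_def sum_distrib_left mult_ac)

lemma cre_ann_eq_count: "cre u (ann u \<psi>) M = of_nat (count M u) * \<psi> M"
proof (cases "u \<in># M")
  case True
  have "complex_of_real (sqrt (real (count M u))) * complex_of_real (sqrt (real (count M u)))
      = of_nat (count M u)"
    by (simp flip: of_real_mult)
  moreover have "count (M - {#u#}) u + 1 = count M u"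
    using True by (simp add: in_countE)
  ultimately show ?thesis
    using True by (simp add: cre_def ann_def insert_DiffM)
next
  case False
  then show ?thesis by (simp add: cre_def ann_def not_in_iff)
qed

lemma mom_cre_mom_ann:
  "mom_cre n w (mom_ann n x \<psi>) M = (\<Sum>u\<in>modes n. \<Sum>v\<in>modes n.
     sgn_dot u w * sgn_dot v x * cre u (ann v \<psi>) M) / 2 ^ n"
proof -
  define c where "c = complex_of_real (2 powr (- real n / 2))"
  have c_square: "c * c = 1 / 2 ^ n"
    by (simp add: c_def powr_minus powr_realpow divide_simps flip: of_real_mult powr_add)
  have "mom_ann n x \<psi> = (\<lambda>N. c * (\<Sum>v\<in>modes n. sgn_dot v x * ann v \<psi> N))"
    by (simp add: mom_ann_def c_def)
  then have "mom_cre n w (mom_ann n x \<psi>) M = c *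
      (\<Sum>u\<in>modes n. sgn_dot u w * (c * (\<Sum>v\<in>modes n. sgn_dot v x * cre u (ann v \<psi>) M)))"
    by (simp only: mom_cre_def cre_linear_combination flip: c_def)
  also have "\<dots> = c * c * (\<Sum>u\<in>modes n. \<Sum>v\<in>modes n.
      sgn_dot u w * sgn_dot v x * cre u (ann v \<psi>) M)"
    unfolding sum_distrib_left by (intro sum.cong refl) (simp only: mult_ac)
  finally show ?thesis
    by (simp add: c_square)
qed

lemma hop_eq_number_operators:
  assumes "y \<in> modes n"
  shows "hop n l y \<psi> M = complex_of_real (1 / sqrt (real l)) *
     ((\<Sum>u\<in>modes n. sgn_dot u y * of_nat (count M u)) * \<psi> M)"
proof -
  let ?F = "\<lambda>x u v. sgn_dot u (bxor x y) * sgn_dot v x * cre u (ann v \<psi>) M"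
  have "(\<Sum>x\<in>modes n. mom_cre n (bxor x y) (mom_ann n x \<psi>) M)
      = (\<Sum>x\<in>modes n. \<Sum>u\<in>modes n. \<Sum>v\<in>modes n. ?F x u v) / 2 ^ n"
    by (simp add: mom_cre_mom_ann sum_divide_distrib)
  also have "(\<Sum>x\<in>modes n. \<Sum>u\<in>modes n. \<Sum>v\<in>modes n. ?F x u v)
      = (\<Sum>u\<in>modes n. \<Sum>v\<in>modes n. \<Sum>x\<in>modes n. ?F x u v)"
    by (subst sum.swap) (rule sum.cong[OF refl sum.swap])
  also have "\<dots> = (\<Sum>u\<in>modes n. \<Sum>v\<in>modes n.
      (if u = v then sgn_dot u y * 2 ^ n else 0) * cre u (ann v \<psi>) M)"
    using assms
    by (intro sum.cong refl) (simp add: sum_sgn_dot_bxor_orthogonal flip: sum_distrib_right)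
  also have "\<dots> = (\<Sum>u\<in>modes n. sgn_dot u y * 2 ^ n * cre u (ann u \<psi>) M)"
    by (simp add: if_distrib[of "\<lambda>z. z * _"] sum.delta cong: if_cong)
  also have "\<dots> = 2 ^ n * ((\<Sum>u\<in>modes n. sgn_dot u y * of_nat (count M u)) * \<psi> M)"
    by (simp add: cre_ann_eq_count sum_distrib_left sum_distrib_right mult_ac)
  finally show ?thesis
    by (simp add: hop_def)
qed

lemma cre_list_support: "cre_list ss M \<noteq> 0 \<Longrightarrow> M = mset ss"
proof (induction ss arbitrary: M)
  case Nil
  then show ?case by (simp add: cre_list_def vac_def split: if_splits)
next
  case (Cons s ss)
  then have "s \<in># M" "cre_list ss (M - {#s#}) \<noteq> 0"
    by (auto simp: cre_list_def cre_def split: if_splits)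
  with Cons.IH show ?case
    by (metis insert_DiffM mset.simps(2))
qed

lemma sum_mult_count_eq_sum_mset:
  assumes "finite A" "set_mset M \<subseteq> A"
  shows "(\<Sum>u\<in>A. g u * of_nat (count M u)) = (\<Sum>x\<in>#M. g x :: 'a :: comm_semiring_1)"
  using assms(2)
proof (induction M)
  case empty
  then show ?case by simp
next
  case (add a M)
  have "(\<Sum>u\<in>A. g u * of_nat (count (add_mset a M) u))
      = (\<Sum>u\<in>A. g u * of_nat (count M u)) + (\<Sum>u\<in>A. if u = a then g u else 0)"
    by (auto simp: sum.distrib[symmetric] algebra_simps intro!: sum.cong)
  with add assms(1) show ?case
    by (simp add: sum.delta' add.commute)
qed

lemma hop_eigenvector:
  assumes "y \<in> modes n" "set ss \<subseteq> modes n"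
    and support: "\<And>M. \<psi> M \<noteq> 0 \<Longrightarrow> M = mset ss"
  shows "hop n l y \<psi> = (\<lambda>M. complex_of_real (1 / sqrt (real l)) *
     (\<Sum>i<length ss. sgn_dot y (ss ! i)) * \<psi> M)"
proof
  fix M
  show "hop n l y \<psi> M = complex_of_real (1 / sqrt (real l)) *
      (\<Sum>i<length ss. sgn_dot y (ss ! i)) * \<psi> M"
  proof (cases "\<psi> M = 0")
    case False
    then have "M = mset ss"
      by (rule support)
    then have "(\<Sum>u\<in>modes n. sgn_dot u y * of_nat (count M u)) = (\<Sum>i<length ss. sgn_dot y (ss ! i))"
      using assms(2)
      by (simp add: sum_mult_count_eq_sum_mset sum_mset_sum_list sum_list_sum_nth atLeast0LessThan sgn_dot_commute
          flip: mset_map)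
    then show ?thesis
      using hop_eq_number_operators[OF assms(1)] by simp
  qed (simp add: hop_eq_number_operators[OF assms(1)])
qed

lemma gamma_eq_square:
  assumes "\<forall>s\<in>set ss. s \<in> modes n"
  shows "gamma y ss = (complex_of_real (1 / sqrt (real (length ss))) *
     (\<Sum>i<length ss. sgn_dot y (ss ! i)))\<^sup>2"
proof -
  let ?l = "length ss"
  have "(\<Sum>i<?l. sgn_dot y (ss ! i))\<^sup>2 = (\<Sum>i<?l. \<Sum>j<?l. sgn_dot y (ss ! i) * sgn_dot y (ss ! j))"
    by (simp add: power2_eq_square sum_product)
  also have "\<dots> = (\<Sum>i<?l. \<Sum>j<?l. sgn_dot y (bxor (ss ! i) (ss ! j)))"
    using assms by (intro sum.cong refl) (simp add: sgn_dot_bxor modes_def)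
  finally have sum_square: "(\<Sum>i<?l. sgn_dot y (ss ! i))\<^sup>2
      = (\<Sum>i<?l. \<Sum>j<?l. sgn_dot y (bxor (ss ! i) (ss ! j)))" .
  have "(complex_of_real (1 / sqrt (real ?l)))\<^sup>2 = complex_of_real (1 / real ?l)"
    by (simp add: power_divide flip: of_real_power)
  with sum_square show ?thesis
    unfolding gamma_def power_mult_distrib by simp
qed

theorem mainTheorem10:
  fixes n :: nat and y :: mode and ss :: "mode list"
  assumes "y \<in> modes n" and "\<forall>s\<in>set ss. s \<in> modes n"
  shows "hop n (length ss) y (hop n (length ss) y (cre_list ss))
           = (\<lambda>M. gamma y ss * cre_list ss M)"
proof -
  define e where "e = complex_of_real (1 / sqrt (real (length ss))) *
    (\<Sum>i<length ss. sgn_dot y (ss ! i))"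
  have ss: "set ss \<subseteq> modes n"
    using assms(2) by blast
  have "hop n (length ss) y (cre_list ss) = (\<lambda>M. e * cre_list ss M)"
    unfolding e_def by (rule hop_eigenvector[OF assms(1) ss cre_list_support])
  moreover have "hop n (length ss) y (\<lambda>M. e * cre_list ss M) = (\<lambda>M. e * (e * cre_list ss M))"
    unfolding e_def by (rule hop_eigenvector[OF assms(1) ss]) (simp add: cre_list_support)
  moreover have "e * e = gamma y ss"
    unfolding e_def gamma_eq_square[OF assms(2)] by (simp add: power2_eq_square)
  ultimately show ?thesis
    by (simp flip: mult.assoc)
qed

end
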